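(* Let $A_{n,m}=\langle\varphi,\psi,\tau\rangle$ be the subgroup of $\operatorname{Aut}(Y_{n,m})$ generated by the maps $\varphi,\psi,\tau$ defined below. Then: (1) $A_{1,0}\cong\{1\}$ and $A_{2,0}\cong A_{1,1}\cong C_2$; (2) $A_{n,0}\cong D_n$ for all $n>2$; (3) $A_{1,m}\cong C_2\times C_2$ for all $m>1$; (4) if $n>1$ and $m>0$, then (a) if at least one of $n,m$ is odd, $A_{n,m}\cong D_{2n}$; (b) otherwise ($n$ and $m$ both even), $A_{n,m}\cong D_n\times C_2$.
   Context: For integers $n\ge1$, $m\ge0$, the Yoke graph $Y_{n,m}$ has vertices the tuples $v=(v_0,\dots,v_{m+1})$ with $v_0,v_{m+1}\in\mathbb{Z}_n$, $v_1,\dots,v_m\in\{0,1\}$, $\sum v_i\equiv0\pmod n$; $u\sim v$ iff there is $0\le i\le m$ with $u_j=v_j$ for $j\notin\{i,i+1\}$ and either ($u_i=v_i+1$, $u_{i+1}=v_{i+1}-1$) or ($u_i=v_i-1$, $u_{i+1}=v_{i+1}+1$), bucket entries computed mod $n$. Define maps on vertices (bucket entries mod $n$): $\varphi(v_0,v_1,\dots,v_m,v_{m+1})=(v_0+1,v_1,\dots,v_m,v_{m+1}-1)$; $\psi(v_0,\dots,v_{m+1})=(v_{m+1},v_m,\dots,v_1,v_0)$; $\tau(v_0,v_1,\dots,v_m,v_{m+1})=(-v_0,1-v_1,\dots,1-v_m,-(m+v_{m+1}))$. These are automorphisms of $Y_{n,m}$. $C_k$ is the cyclic group of order $k$, and $D_k$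 is the dihedral group of order $2k$, $D_k=\langle g,h\mid g^k=h^2=1,\ hgh=g^{-1}\rangle$. *)

theory Defs
  imports "HOL-Algebra.Algebra"
begin

(* Vertices of Y_{n,m}: tuples (v_0,...,v_{m+1}) encoded as functions nat => int,
   with v i = 0 for i > m+1.  Buckets v_0, v_{m+1} are represented in {0..<n}. *)
definition yoke_verts :: "nat \<Rightarrow> nat \<Rightarrow> (nat \<Rightarrow> int) set" where
  "yoke_verts n m = {v. v 0 \<in> {0..<int n} \<and> v (m+1) \<in> {0..<int n}
      \<and> (\<forall>i\<in>{1..m}. v i \<in> {0,1}) \<and> (\<forall>i>m+1. v i = 0)
      \<and> (\<Sum>i\<le>m+1. v i) mod int n = 0}"

definition yoke_add :: "nat \<Rightarrow> nat \<Rightarrow> nat \<Rightarrow> int \<Rightarrow> int \<Rightarrow> int" where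
  "yoke_add n m i x d = (if i = 0 \<or> i = m+1 then (x + d) mod int n else x + d)"

definition yoke_adj :: "nat \<Rightarrow> nat \<Rightarrow> (nat \<Rightarrow> int) \<Rightarrow> (nat \<Rightarrow> int) \<Rightarrow> bool" where
  "yoke_adj n m u v \<longleftrightarrow> (\<exists>i\<le>m. (\<forall>j. j \<noteq> i \<and> j \<noteq> i+1 \<longrightarrow> u j = v j) \<and>
      ((u i = yoke_add n m i (v i) 1 \<and> u (i+1) = yoke_add n m (i+1) (v (i+1)) (-1)) \<or>
       (u i = yoke_add n m i (v i) (-1) \<and> u (i+1) = yoke_add n m (i+1) (v (i+1)) 1)))"

definition yoke_aut :: "nat \<Rightarrow> nat \<Rightarrow> ((nat \<Rightarrow> int) \<Rightarrow> (nat \<Rightarrow> int)) monoid" where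
  "yoke_aut n m = (BijGroup (yoke_verts n m))
     \<lparr>carrier := {f \<in> carrier (BijGroup (yoke_verts n m)).
        \<forall>u\<in>yoke_verts n m. \<forall>w\<in>yoke_verts n m. yoke_adj n m u w \<longleftrightarrow> yoke_adj n m (f u) (f w)}\<rparr>"

definition yoke_phi :: "nat \<Rightarrow> nat \<Rightarrow> (nat \<Rightarrow> int) \<Rightarrow> (nat \<Rightarrow> int)" where
  "yoke_phi n m v = (\<lambda>i. if i = 0 then (v 0 + 1) mod int n
                         else if i = m+1 then (v (m+1) - 1) mod int n else v i)"

definition yoke_psi :: "nat \<Rightarrow> nat \<Rightarrow> (nat \<Rightarrow> int) \<Rightarrow> (nat \<Rightarrow> int)" where
  "yoke_psi n m v = (\<lambda>i. if i \<le> m+1 then v (m+1-i) else 0)"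

definition yoke_tau :: "nat \<Rightarrow> nat \<Rightarrow> (nat \<Rightarrow> int) \<Rightarrow> (nat \<Rightarrow> int)" where
  "yoke_tau n m v = (\<lambda>i. if i = 0 then (- v 0) mod int n
                         else if i = m+1 then (- (int m + v (m+1))) mod int n
                         else if i \<le> m then 1 - v i else 0)"

definition yoke_A :: "nat \<Rightarrow> nat \<Rightarrow> ((nat \<Rightarrow> int) \<Rightarrow> (nat \<Rightarrow> int)) monoid" where
  "yoke_A n m = subgroup_generated (yoke_aut n m)
     {restrict (yoke_phi n m) (yoke_verts n m),
      restrict (yoke_psi n m) (yoke_verts n m),
      restrict (yoke_tau n m) (yoke_verts n m)}"

(* Dihedral group D_k of order 2k: (i,b) stands for g^i h^b, 0 <= i < k *)
definition dihedral_group :: "nat \<Rightarrow> (int \<times> bool) monoid" where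
  "dihedral_group k = \<lparr>carrier = {0..<int k} \<times> UNIV,
     monoid.mult = (\<lambda>(i,a) (j,b). ((i + (if a then - j else j)) mod int k, a \<noteq> b)),
     one = (0, False)\<rparr>"

abbreviation cyclic_group :: "nat \<Rightarrow> int monoid" where
  "cyclic_group k \<equiv> integer_mod_group k"

end

theory Submission
  imports Defs
begin

(* Write \<sigma>\<^sub>k for the map adding k to the bucket v\<^sub>0 and subtracting it from v\<^sub>m\<^sub>+\<^sub>1,
   so that \<phi> = \<sigma>\<^sub>1.  The generators satisfy \<sigma>\<^sub>k \<sigma>\<^sub>l = \<sigma>\<^sub>k\<^sub>+\<^sub>l, \<psi>\<^sup>2 = \<tau>\<^sup>2 = 1,
   \<psi> \<sigma>\<^sub>k = \<sigma>\<^sub>-\<^sub>k \<psi>, \<tau> \<sigma>\<^sub>k = \<sigma>\<^sub>-\<^sub>k \<tau> and \<tau> \<psi> = \<sigma>\<^sub>m \<psi> \<tau>, so every element of A(n,m) is a word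
   \<sigma>\<^sub>k \<psi>\<^sup>a \<tau>\<^sup>b with k taken mod n.  Evaluating words at the zero vertex and at
   (n - 1, 1, 0, ..., 0) shows that these 4n words are distinct once n > 1 and m > 0; in the
   degenerate cases \<tau> = \<psi> (m = 0), \<psi> = 1 (on Y(1,1) and Y(2,0)) or \<sigma>\<^sub>k = 1 (n = 1).
   For m = 2h, \<zeta> = \<sigma>\<^sub>h \<psi> \<tau> is a central involution and A(n,m) = \<langle>\<phi>, \<psi>\<rangle> \<times> \<langle>\<zeta>\<rangle> \<cong> D\<^sub>n \<times> C\<^sub>2.
   If n or m is odd, choose j with 2j \<equiv> m + 1 (mod n): then \<rho> = \<sigma>\<^sub>j \<psi> \<tau> satisfies \<rho>\<^sup>2 = \<phi> and
   \<psi> \<rho> \<psi> = \<rho>\<^sup>-\<^sup>1, so \<rho> has order 2n and A(n,m) = \<langle>\<rho>, \<psi>\<rangle> \<cong> D\<^sub>2\<^sub>n. *)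

definition yoke_shift :: "nat \<Rightarrow> nat \<Rightarrow> int \<Rightarrow> (nat \<Rightarrow> int) \<Rightarrow> (nat \<Rightarrow> int)" where
  "yoke_shift n m k v = (\<lambda>i. if i = 0 then (v 0 + k) mod int n
                             else if i = m+1 then (v (m+1) - k) mod int n else v i)"

lemma yoke_phi_eq_shift: "yoke_phi n m = yoke_shift n m 1"
  by (intro ext) (simp add: yoke_phi_def yoke_shift_def)

lemma sum_atMost_Suc_eq_ends:
  fixes f :: "nat \<Rightarrow> 'a::comm_monoid_add"
  shows "(\<Sum>i\<le>m+1. f i) = f 0 + (\<Sum>i\<in>{1..m}. f i) + f (m+1)"
proof -
  have "{..m+1} = insert 0 (insert (m+1) {1..m})" by fastforce
  then show ?thesis by (simp add: add.commute add.left_commute)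
qed

lemma yoke_verts_iff:
  "v \<in> yoke_verts n m \<longleftrightarrow> 0 \<le> v 0 \<and> v 0 < int n \<and> 0 \<le> v (m+1) \<and> v (m+1) < int n
     \<and> (\<forall>i. 1 \<le> i \<and> i \<le> m \<longrightarrow> v i = 0 \<or> v i = 1) \<and> (\<forall>i>m+1. v i = 0)
     \<and> int n dvd (v 0 + (\<Sum>i\<in>{1..m}. v i) + v (m+1))"
  unfolding yoke_verts_def sum_atMost_Suc_eq_ends by (auto simp: mod_eq_0_iff_dvd)

lemma dvd_mod_add_mod_iff:
  fixes d :: int
  shows "d dvd (a mod d + b + c mod d) \<longleftrightarrow> d dvd (a + b + c)"
  by (metis dvd_eq_mod_eq_0 mod_add_left_eq mod_add_right_eq)

lemma yoke_shift_in_verts: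
  assumes "v \<in> yoke_verts n m" "n > 0"
  shows "yoke_shift n m k v \<in> yoke_verts n m"
proof -
  let ?S = "\<lambda>w. \<Sum>i\<in>{1..m}. w i"
  have "?S (yoke_shift n m k v) = ?S v"
    by (rule sum.cong) (auto simp: yoke_shift_def)
  moreover have "int n dvd ((v 0 + k) mod int n + ?S v + (v (m+1) - k) mod int n)
      \<longleftrightarrow> int n dvd (v 0 + ?S v + v (m+1))"
    unfolding dvd_mod_add_mod_iff by (simp add: algebra_simps)
  ultimately show ?thesis
    using assms unfolding yoke_verts_iff by (auto simp: yoke_shift_def)
qed

lemma yoke_psi_in_verts:
  assumes "v \<in> yoke_verts n m"
  shows "yoke_psi n m v \<in> yoke_verts n m"
proof -
  have "(\<Sum>i\<in>{1..m}. yoke_psi n m v i) = (\<Sum>i\<in>{1..m}. v (m+1-i))"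
    by (rule sum.cong) (auto simp: yoke_psi_def)
  also have "\<dots> = (\<Sum>i\<in>{1..m}. v i)"
    using sum.atLeastAtMost_rev[of "\<lambda>i. v (m+1-i)" 1 m] by simp
  finally have "(\<Sum>i\<in>{1..m}. yoke_psi n m v i) = (\<Sum>i\<in>{1..m}. v i)" .
  moreover have "v (m+1-i) = 0 \<or> v (m+1-i) = 1" if "1 \<le> i" "i \<le> m" for i
  proof -
    have "1 \<le> m+1-i" "m+1-i \<le> m" using that by auto
    then show ?thesis using assms unfolding yoke_verts_iff by blast
  qed
  ultimately show ?thesis
    using assms unfolding yoke_verts_iff by (auto simp: yoke_psi_def algebra_simps)
qed

lemma yoke_tau_in_verts:
  assumes "v \<in> yoke_verts n m"
  shows "yoke_tau n m v \<in> yoke_verts n m"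
proof -
  let ?S = "\<lambda>w. \<Sum>i\<in>{1..m}. w i"
  have "?S (yoke_tau n m v) = (\<Sum>i\<in>{1..m}. 1 - v i)"
    by (rule sum.cong) (auto simp: yoke_tau_def)
  then have "?S (yoke_tau n m v) = int m - ?S v"
    by (simp add: sum_subtractf)
  moreover have "int n dvd ((- v 0) mod int n + (int m - ?S v) + (- (int m + v (m+1))) mod int n)
      \<longleftrightarrow> int n dvd (v 0 + ?S v + v (m+1))"
  proof -
    have "- v 0 + (int m - ?S v) + - (int m + v (m+1)) = - (v 0 + ?S v + v (m+1))" by simp
    then show ?thesis unfolding dvd_mod_add_mod_iff by (simp only: dvd_minus_iff)
  qed
  ultimately show ?thesis
    using assms unfolding yoke_verts_iff by (auto simp: yoke_tau_def)
qed

lemma yoke_shift_shift: "yoke_shift n m k (yoke_shift n m l v) = yoke_shift n m (k + l) v"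
  by (intro ext) (simp add: yoke_shift_def mod_simps algebra_simps minus_diff_commute)

lemma yoke_shift_mod: "yoke_shift n m (k mod int n) = yoke_shift n m k"
  by (intro ext) (simp add: yoke_shift_def mod_simps)

lemma yoke_shift_zero: "v \<in> yoke_verts n m \<Longrightarrow> yoke_shift n m 0 v = v"
  by (intro ext) (simp add: yoke_shift_def yoke_verts_iff)

lemma yoke_psi_psi: "v \<in> yoke_verts n m \<Longrightarrow> yoke_psi n m (yoke_psi n m v) = v"
  by (intro ext) (auto simp: yoke_psi_def yoke_verts_iff)

lemma yoke_tau_tau: "v \<in> yoke_verts n m \<Longrightarrow> yoke_tau n m (yoke_tau n m v) = v"
  by (intro ext) (auto simp: yoke_tau_def yoke_verts_iff mod_simps)

lemma yoke_psi_shift: "yoke_psi n m (yoke_shift n m k v) = yoke_shift n m (-k) (yoke_psi n m v)"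
  by (intro ext) (auto simp: yoke_psi_def yoke_shift_def)

lemma yoke_tau_shift: "yoke_tau n m (yoke_shift n m k v) = yoke_shift n m (-k) (yoke_tau n m v)"
  by (intro ext) (auto simp: yoke_tau_def yoke_shift_def mod_simps algebra_simps minus_diff_commute)

lemma yoke_tau_psi:
  "v \<in> yoke_verts n m \<Longrightarrow>
     yoke_tau n m (yoke_psi n m v) = yoke_shift n m (int m) (yoke_psi n m (yoke_tau n m v))"
  by (intro ext)
     (auto simp: yoke_tau_def yoke_psi_def yoke_shift_def yoke_verts_iff mod_simps algebra_simps
        minus_diff_commute)

lemma yoke_adjE:
  assumes "yoke_adj n m u w"
  obtains i d where "i \<le> m" "d = 1 \<or> d = -1" "\<And>j. j \<noteq> i \<Longrightarrow> j \<noteq> i+1 \<Longrightarrow> u j = w j"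
    "u i = yoke_add n m i (w i) d" "u (i+1) = yoke_add n m (i+1) (w (i+1)) (-d)"
proof -
  obtain i where "i \<le> m" "\<forall>j. j \<noteq> i \<and> j \<noteq> i+1 \<longrightarrow> u j = w j"
    "(u i = yoke_add n m i (w i) 1 \<and> u (i+1) = yoke_add n m (i+1) (w (i+1)) (-1)) \<or>
     (u i = yoke_add n m i (w i) (-1) \<and> u (i+1) = yoke_add n m (i+1) (w (i+1)) (- (-1)))"
    using assms unfolding yoke_adj_def by auto
  then show thesis
    using that[of i 1] that[of i "-1"] by blast
qed

lemma yoke_adjI:
  assumes "i \<le> m" "d = 1 \<or> d = -1" "\<And>j. j \<noteq> i \<Longrightarrow> j \<noteq> i+1 \<Longrightarrow> u j = w j"
    "u i = yoke_add n m i (w i) d" "u (i+1) = yoke_add n m (i+1) (w (i+1)) (-d)"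
  shows "yoke_adj n m u w"
  using assms unfolding yoke_adj_def by auto

lemma yoke_adj_shift:
  assumes "yoke_adj n m u w"
  shows "yoke_adj n m (yoke_shift n m k u) (yoke_shift n m k w)"
proof -
  obtain i d where i: "i \<le> m" "d = 1 \<or> d = -1" "\<And>j. j \<noteq> i \<Longrightarrow> j \<noteq> i+1 \<Longrightarrow> u j = w j"
    "u i = yoke_add n m i (w i) d" "u (i+1) = yoke_add n m (i+1) (w (i+1)) (-d)"
    using yoke_adjE[OF assms] by blast
  show ?thesis
    by (rule yoke_adjI[OF i(1,2)])
       (use i in \<open>auto simp: yoke_shift_def yoke_add_def mod_simps algebra_simps\<close>)
qed

lemma yoke_adj_psi:
  assumes "yoke_adj n m u w"
  shows "yoke_adj n m (yoke_psi n m u) (yoke_psi n m w)"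
proof -
  obtain i d where i: "i \<le> m" "d = 1 \<or> d = -1" "\<And>j. j \<noteq> i \<Longrightarrow> j \<noteq> i+1 \<Longrightarrow> u j = w j"
    "u i = yoke_add n m i (w i) d" "u (i+1) = yoke_add n m (i+1) (w (i+1)) (-d)"
    using yoke_adjE[OF assms] by blast
  have mirror: "m + 1 - (m - i) = i + 1" "m + 1 - (m - i + 1) = i"
    using i(1) by auto
  show ?thesis
  proof (rule yoke_adjI[of "m - i" m "-d"])
    fix j assume "j \<noteq> m - i" "j \<noteq> m - i + 1"
    then show "yoke_psi n m u j = yoke_psi n m w j"
      using i(1) i(3)[of "m + 1 - j"] by (auto simp: yoke_psi_def)
  qed (use i mirror in \<open>auto simp: yoke_psi_def yoke_add_def\<close>)
qed

lemma yoke_tau_step: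
  assumes "u j = yoke_add n m j (w j) e" "j \<le> m+1"
  shows "yoke_tau n m u j = yoke_add n m j (yoke_tau n m w j) (-e)"
proof -
  consider "j = 0" | "j = m+1" "j \<noteq> 0" | "j \<noteq> 0" "j \<noteq> m+1" by blast
  then show ?thesis
  proof cases
    case 1
    then show ?thesis using assms by (simp add: yoke_tau_def yoke_add_def mod_simps)
  next
    case 2
    then show ?thesis using assms by (simp add: yoke_tau_def yoke_add_def mod_simps diff_diff_eq[symmetric])
  next
    case 3
    then show ?thesis using assms by (simp add: yoke_tau_def yoke_add_def)
  qed
qed

lemma yoke_adj_tau:
  assumes "yoke_adj n m u w"
  shows "yoke_adj n m (yoke_tau n m u) (yoke_tau n m w)"
proof -
  obtain i d where i: "i \<le> m" "d = 1 \<or> d = -1" "\<And>j. j \<noteq> i \<Longrightarrow> j \<noteq> i+1 \<Longrightarrow> u j = w j"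
    "u i = yoke_add n m i (w i) d" "u (i+1) = yoke_add n m (i+1) (w (i+1)) (-d)"
    using yoke_adjE[OF assms] by blast
  show ?thesis
  proof (rule yoke_adjI[of i m "-d"])
    show "yoke_tau n m u i = yoke_add n m i (yoke_tau n m w i) (-d)"
      "yoke_tau n m u (i+1) = yoke_add n m (i+1) (yoke_tau n m w (i+1)) (- (-d))"
      by (rule yoke_tau_step; use i in simp)+
  qed (use i in \<open>auto simp: yoke_tau_def\<close>)
qed

definition yoke_word :: "nat \<Rightarrow> nat \<Rightarrow> int \<Rightarrow> bool \<Rightarrow> bool \<Rightarrow> (nat \<Rightarrow> int) \<Rightarrow> (nat \<Rightarrow> int)" where
  "yoke_word n m k a b = yoke_shift n m k \<circ> (if a then yoke_psi n m else id) \<circ> (if b then yoke_tau n m else id)"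

(* The shift of the normal form of (\<sigma>\<^sub>k \<psi>\<^sup>a \<tau>\<^sup>b)(\<sigma>\<^sub>k\<^sub>' \<psi>\<^sup>a\<^sup>' \<tau>\<^sup>b\<^sup>'), obtained by moving \<sigma>\<^sub>k\<^sub>' to the
   left through \<psi>\<^sup>a \<tau>\<^sup>b and then \<psi>\<^sup>a\<^sup>' through \<tau>\<^sup>b. *)
definition word_prod_shift :: "nat \<Rightarrow> int \<Rightarrow> bool \<Rightarrow> bool \<Rightarrow> int \<Rightarrow> bool \<Rightarrow> int" where
  "word_prod_shift m k a b k' a' =
     k + (if a = b then k' else - k') + (if b \<and> a' then (if a then - int m else int m) else 0)"

lemma yoke_word_in_verts: "n > 0 \<Longrightarrow> v \<in> yoke_verts n m \<Longrightarrow> yoke_word n m k a b v \<in> yoke_verts n m"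
  by (simp add: yoke_word_def yoke_shift_in_verts yoke_psi_in_verts yoke_tau_in_verts)

lemma yoke_word_zero: "v \<in> yoke_verts n m \<Longrightarrow> yoke_word n m 0 False False v = v"
  by (simp add: yoke_word_def yoke_shift_zero)

lemma yoke_word_comp:
  assumes "n > 0" "v \<in> yoke_verts n m"
  shows "yoke_word n m k a b (yoke_word n m k' a' b' v)
           = yoke_word n m (word_prod_shift m k a b k' a') (a \<noteq> a') (b \<noteq> b') v"
  using assms
  by (cases a; cases b; cases a'; cases b')
     (simp_all add: yoke_word_def word_prod_shift_def yoke_shift_in_verts yoke_psi_in_verts
        yoke_tau_in_verts yoke_shift_shift yoke_psi_shift yoke_tau_shift yoke_tau_psi yoke_psi_psi
        yoke_tau_tau algebra_simps)

lemma yoke_word_inverse: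
  assumes "n > 0"
  obtains k' where "\<And>v. v \<in> yoke_verts n m \<Longrightarrow> yoke_word n m k' a b (yoke_word n m k a b v) = v"
    and "\<And>v. v \<in> yoke_verts n m \<Longrightarrow> yoke_word n m k a b (yoke_word n m k' a b v) = v"
proof
  define k' where "k' = (if a = b then - k + (if a \<and> b then int m else 0) else k)"
  have "word_prod_shift m k' a b k a = 0" "word_prod_shift m k a b k' a = 0"
    by (auto simp: word_prod_shift_def k'_def)
  then show "yoke_word n m k' a b (yoke_word n m k a b v) = v"
    "yoke_word n m k a b (yoke_word n m k' a b v) = v" if "v \<in> yoke_verts n m" for v
    using assms that by (simp_all add: yoke_word_comp yoke_word_zero)
qed

lemma yoke_adj_word: "yoke_adj n m u w \<Longrightarrow> yoke_adj n m (yoke_word n m k a b u) (yoke_word n m k a b w)"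
  unfolding yoke_word_def by (auto intro!: yoke_adj_shift yoke_adj_psi yoke_adj_tau)

lemma carrier_yoke_aut:
  "carrier (yoke_aut n m) = {f \<in> Bij (yoke_verts n m). \<forall>u\<in>yoke_verts n m. \<forall>w\<in>yoke_verts n m.
      yoke_adj n m u w \<longleftrightarrow> yoke_adj n m (f u) (f w)}"
  by (simp add: yoke_aut_def BijGroup_def)

lemma mult_yoke_aut:
  "f \<in> carrier (yoke_aut n m) \<Longrightarrow> g \<in> carrier (yoke_aut n m) \<Longrightarrow>
     f \<otimes>\<^bsub>yoke_aut n m\<^esub> g = compose (yoke_verts n m) f g"
  by (simp add: yoke_aut_def BijGroup_def carrier_yoke_aut)

lemma subgroup_yoke_aut: "subgroup (carrier (yoke_aut n m)) (BijGroup (yoke_verts n m))"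
proof (rule group.subgroupI[OF group_BijGroup])
  show "carrier (yoke_aut n m) \<subseteq> carrier (BijGroup (yoke_verts n m))"
    by (auto simp: carrier_yoke_aut BijGroup_def)
  show "carrier (yoke_aut n m) \<noteq> {}"
    by (auto simp: carrier_yoke_aut Bij_def bij_betw_def inj_on_def intro!: exI[of _ "\<lambda>x\<in>yoke_verts n m. x"])
next
  fix f g assume f: "f \<in> carrier (yoke_aut n m)" and g: "g \<in> carrier (yoke_aut n m)"
  then have fB: "f \<in> Bij (yoke_verts n m)" and gB: "g \<in> Bij (yoke_verts n m)"
    and fA: "\<forall>u\<in>yoke_verts n m. \<forall>w\<in>yoke_verts n m. yoke_adj n m u w \<longleftrightarrow> yoke_adj n m (f u) (f w)"
    and gA: "\<forall>u\<in>yoke_verts n m. \<forall>w\<in>yoke_verts n m. yoke_adj n m u w \<longleftrightarrow> yoke_adj n m (g u) (g w)"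
    by (simp_all add: carrier_yoke_aut)
  have "yoke_adj n m u w \<longleftrightarrow> yoke_adj n m (f (g u)) (f (g w))"
    if "u \<in> yoke_verts n m" "w \<in> yoke_verts n m" for u w
    using fA gA that Bij_imp_funcset[OF gB] by blast
  then show "f \<otimes>\<^bsub>BijGroup (yoke_verts n m)\<^esub> g \<in> carrier (yoke_aut n m)"
    using fB gB compose_Bij[OF fB gB] by (simp add: BijGroup_def carrier_yoke_aut compose_def)
next
  fix f assume f: "f \<in> carrier (yoke_aut n m)"
  then have fB: "f \<in> Bij (yoke_verts n m)"
    and fA: "\<forall>u\<in>yoke_verts n m. \<forall>w\<in>yoke_verts n m. yoke_adj n m u w \<longleftrightarrow> yoke_adj n m (f u) (f w)"
    by (simp_all add: carrier_yoke_aut)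
  have "yoke_adj n m u w \<longleftrightarrow> yoke_adj n m (inv_into (yoke_verts n m) f u) (inv_into (yoke_verts n m) f w)"
    if "u \<in> yoke_verts n m" "w \<in> yoke_verts n m" for u w
  proof -
    have "f (inv_into (yoke_verts n m) f u) = u" "f (inv_into (yoke_verts n m) f w) = w"
      using fB that by (auto simp: Bij_def bij_betw_def f_inv_into_f)
    then show ?thesis
      using fA Bij_inv_into_mem[OF fB] that by metis
  qed
  then show "inv\<^bsub>BijGroup (yoke_verts n m)\<^esub> f \<in> carrier (yoke_aut n m)"
    by (simp add: inv_BijGroup[OF fB] restrict_inv_into_Bij[OF fB] carrier_yoke_aut)
qed

lemma group_yoke_aut: "group (yoke_aut n m)"
  using subgroup.subgroup_is_group[OF subgroup_yoke_aut group_BijGroup] by (simp add: yoke_aut_def)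

definition yoke_aut_word :: "nat \<Rightarrow> nat \<Rightarrow> int \<Rightarrow> bool \<Rightarrow> bool \<Rightarrow> (nat \<Rightarrow> int) \<Rightarrow> (nat \<Rightarrow> int)" where
  "yoke_aut_word n m k a b = restrict (yoke_word n m k a b) (yoke_verts n m)"

definition yoke_words :: "nat \<Rightarrow> nat \<Rightarrow> ((nat \<Rightarrow> int) \<Rightarrow> (nat \<Rightarrow> int)) set" where
  "yoke_words n m = {yoke_aut_word n m k a b | k a b. True}"

lemma yoke_aut_word_eqI:
  "(\<And>v. v \<in> yoke_verts n m \<Longrightarrow> yoke_word n m k a b v = yoke_word n m k' a' b' v) \<Longrightarrow>
     yoke_aut_word n m k a b = yoke_aut_word n m k' a' b'"
  unfolding yoke_aut_word_def by (rule restrict_ext)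

lemma yoke_aut_word_eqD:
  "yoke_aut_word n m k a b = yoke_aut_word n m k' a' b' \<Longrightarrow> v \<in> yoke_verts n m \<Longrightarrow>
     yoke_word n m k a b v = yoke_word n m k' a' b' v"
  unfolding yoke_aut_word_def by (metis restrict_apply')

lemma yoke_aut_word_cong:
  "int n dvd (k - k') \<Longrightarrow> yoke_aut_word n m k a b = yoke_aut_word n m k' a b"
  unfolding yoke_aut_word_def yoke_word_def
  by (metis mod_eq_dvd_iff yoke_shift_mod)

lemma yoke_aut_word_in_carrier:
  assumes "n > 0"
  shows "yoke_aut_word n m k a b \<in> carrier (yoke_aut n m)"
proof -
  obtain k' where k'1: "\<And>v. v \<in> yoke_verts n m \<Longrightarrow> yoke_word n m k' a b (yoke_word n m k a b v) = v"
    and k'2: "\<And>v. v \<in> yoke_verts n m \<Longrightarrow> yoke_word n m k a b (yoke_word n m k' a b v) = v"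
    using yoke_word_inverse[OF assms] by metis
  have "bij_betw (yoke_aut_word n m k a b) (yoke_verts n m) (yoke_verts n m)"
    by (rule bij_betw_byWitness[where f' = "yoke_word n m k' a b"])
       (auto simp: yoke_aut_word_def k'1 k'2 yoke_word_in_verts[OF assms])
  moreover have "yoke_adj n m u w \<longleftrightarrow> yoke_adj n m (yoke_word n m k a b u) (yoke_word n m k a b w)"
    if "u \<in> yoke_verts n m" "w \<in> yoke_verts n m" for u w
  proof
    assume "yoke_adj n m (yoke_word n m k a b u) (yoke_word n m k a b w)"
    from yoke_adj_word[OF this, of k' a b] show "yoke_adj n m u w"
      by (simp add: k'1 that)
  qed (rule yoke_adj_word)
  ultimately show ?thesis
    by (simp add: carrier_yoke_aut Bij_def yoke_aut_word_def)
qed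

lemma yoke_aut_word_mult:
  assumes "n > 0"
  shows "yoke_aut_word n m k a b \<otimes>\<^bsub>yoke_aut n m\<^esub> yoke_aut_word n m k' a' b'
           = yoke_aut_word n m (word_prod_shift m k a b k' a') (a \<noteq> a') (b \<noteq> b')"
  using assms
  by (simp add: mult_yoke_aut yoke_aut_word_in_carrier)
     (auto simp: compose_def yoke_aut_word_def yoke_word_in_verts yoke_word_comp)

lemma yoke_aut_word_zero: "yoke_aut_word n m 0 False False = \<one>\<^bsub>yoke_aut n m\<^esub>"
  by (auto simp: yoke_aut_def BijGroup_def yoke_aut_word_def yoke_word_zero)

lemma yoke_generators_eq_words:
  assumes "n > 0"
  shows "restrict (yoke_phi n m) (yoke_verts n m) = yoke_aut_word n m 1 False False"
    and "restrict (yoke_psi n m) (yoke_verts n m) = yoke_aut_word n m 0 True False"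
    and "restrict (yoke_tau n m) (yoke_verts n m) = yoke_aut_word n m 0 False True"
  using assms
  by (auto simp: yoke_aut_word_def yoke_word_def yoke_phi_eq_shift yoke_shift_zero
      yoke_psi_in_verts yoke_tau_in_verts)

lemma subgroup_yoke_words:
  assumes "n > 0"
  shows "subgroup (yoke_words n m) (yoke_aut n m)"
proof (rule group.subgroupI[OF group_yoke_aut])
  show "yoke_words n m \<subseteq> carrier (yoke_aut n m)"
    using assms by (auto simp: yoke_words_def yoke_aut_word_in_carrier)
  show "yoke_words n m \<noteq> {}"
    by (auto simp: yoke_words_def)
next
  fix f assume "f \<in> yoke_words n m"
  then obtain k a b where f: "f = yoke_aut_word n m k a b"
    by (auto simp: yoke_words_def)
  obtain k' where k'1: "\<And>v. v \<in> yoke_verts n m \<Longrightarrow> yoke_word n m k' a b (yoke_word n m k a b v) = v"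
    and k'2: "\<And>v. v \<in> yoke_verts n m \<Longrightarrow> yoke_word n m k a b (yoke_word n m k' a b v) = v"
    using yoke_word_inverse[OF assms] by metis
  have "yoke_aut_word n m k' a b \<otimes>\<^bsub>yoke_aut n m\<^esub> f = \<one>\<^bsub>yoke_aut n m\<^esub>"
    "f \<otimes>\<^bsub>yoke_aut n m\<^esub> yoke_aut_word n m k' a b = \<one>\<^bsub>yoke_aut n m\<^esub>"
    unfolding f yoke_aut_word_mult[OF assms] yoke_aut_word_zero[symmetric]
    using yoke_word_comp[OF assms, of _ m k' a b k a b] yoke_word_comp[OF assms, of _ m k a b k' a b]
    by (auto intro!: yoke_aut_word_eqI simp: k'1 k'2 yoke_word_zero)
  then have "inv\<^bsub>yoke_aut n m\<^esub> f = yoke_aut_word n m k' a b"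
    using assms by (intro group.inv_equality[OF group_yoke_aut]) (simp_all add: f yoke_aut_word_in_carrier)
  then show "inv\<^bsub>yoke_aut n m\<^esub> f \<in> yoke_words n m"
    by (auto simp: yoke_words_def)
next
  fix f g assume "f \<in> yoke_words n m" "g \<in> yoke_words n m"
  then show "f \<otimes>\<^bsub>yoke_aut n m\<^esub> g \<in> yoke_words n m"
    using assms by (auto simp: yoke_words_def yoke_aut_word_mult) blast
qed

lemma carrier_yoke_A:
  assumes "n > 0"
  shows "carrier (yoke_A n m) = yoke_words n m"
proof
  interpret G: group "yoke_aut n m" by (rule group_yoke_aut)
  let ?A = "carrier (yoke_A n m)"
  let ?phi = "yoke_aut_word n m 1 False False"
  have sub: "subgroup ?A (yoke_aut n m)"
    unfolding yoke_A_def by (rule G.subgroup_subgroup_generated)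
  have gens: "?phi \<in> ?A" "yoke_aut_word n m 0 True False \<in> ?A" "yoke_aut_word n m 0 False True \<in> ?A"
    using G.subgroup_generated_subset_carrier_subset[of "{restrict (yoke_phi n m) (yoke_verts n m),
        restrict (yoke_psi n m) (yoke_verts n m), restrict (yoke_tau n m) (yoke_verts n m)}"] assms
    by (simp_all add: yoke_A_def yoke_generators_eq_words yoke_aut_word_in_carrier)
  have inv_phi: "inv\<^bsub>yoke_aut n m\<^esub> ?phi = yoke_aut_word n m (-1) False False"
    using assms by (intro G.inv_equality)
       (simp_all add: yoke_aut_word_mult word_prod_shift_def yoke_aut_word_in_carrier yoke_aut_word_zero)
  have shifts: "yoke_aut_word n m k False False \<in> ?A" for k
  proof (induction k rule: int_induct[where k = 0])
    case base
    then show ?case using subgroup.one_closed[OF sub] by (simp add: yoke_aut_word_zero)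
  next
    case (step1 i)
    have "yoke_aut_word n m (i+1) False False = ?phi \<otimes>\<^bsub>yoke_aut n m\<^esub> yoke_aut_word n m i False False"
      using assms by (simp add: yoke_aut_word_mult word_prod_shift_def add.commute)
    then show ?case using step1 gens(1) subgroup.m_closed[OF sub] by metis
  next
    case (step2 i)
    have "yoke_aut_word n m (i-1) False False
        = inv\<^bsub>yoke_aut n m\<^esub> ?phi \<otimes>\<^bsub>yoke_aut n m\<^esub> yoke_aut_word n m i False False"
      using assms by (simp add: inv_phi yoke_aut_word_mult word_prod_shift_def)
    then show ?case using step2 gens(1) subgroup.m_closed[OF sub] subgroup.m_inv_closed[OF sub] by metis
  qed
  show "yoke_words n m \<subseteq> ?A"
  proof
    fix f assume "f \<in> yoke_words n m"
    then obtain k a b where f: "f = yoke_aut_word n m k a b"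
      by (auto simp: yoke_words_def)
    have "f = yoke_aut_word n m k False False \<otimes>\<^bsub>yoke_aut n m\<^esub>
            (yoke_aut_word n m 0 a False \<otimes>\<^bsub>yoke_aut n m\<^esub> yoke_aut_word n m 0 False b)"
      using assms by (simp add: f yoke_aut_word_mult word_prod_shift_def)
    moreover have "yoke_aut_word n m 0 a False \<in> ?A" "yoke_aut_word n m 0 False b \<in> ?A"
      using gens shifts[of 0] by (cases a; cases b; simp)+
    ultimately show "f \<in> ?A"
      using shifts subgroup.m_closed[OF sub] by metis
  qed
  show "?A \<subseteq> yoke_words n m"
    unfolding yoke_A_def using assms
    by (intro G.subgroup_generated_minimal subgroup_yoke_words)
       (auto simp: yoke_generators_eq_words yoke_words_def)
qed

lemma yoke_A_isoI:
  fixes H :: "('h, 'z) monoid_scheme" and k :: "'h \<Rightarrow> int" and a b :: "'h \<Rightarrow> bool"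
  assumes "group H" "n > 0"
    and surj: "\<And>k' a' b'. \<exists>x\<in>carrier H. yoke_aut_word n m (k x) (a x) (b x) = yoke_aut_word n m k' a' b'"
    and inj: "inj_on (\<lambda>x. yoke_aut_word n m (k x) (a x) (b x)) (carrier H)"
    and mult: "\<And>x y. x \<in> carrier H \<Longrightarrow> y \<in> carrier H \<Longrightarrow>
      int n dvd (k (x \<otimes>\<^bsub>H\<^esub> y) - word_prod_shift m (k x) (a x) (b x) (k y) (a y))
      \<and> a (x \<otimes>\<^bsub>H\<^esub> y) = (a x \<noteq> a y) \<and> b (x \<otimes>\<^bsub>H\<^esub> y) = (b x \<noteq> b y)"
  shows "yoke_A n m \<cong> H"
proof -
  let ?f = "\<lambda>x. yoke_aut_word n m (k x) (a x) (b x)"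
  have image: "?f ` carrier H = carrier (yoke_A n m)"
  proof
    show "?f ` carrier H \<subseteq> carrier (yoke_A n m)"
      unfolding carrier_yoke_A[OF assms(2)] yoke_words_def by blast
  next
    show "carrier (yoke_A n m) \<subseteq> ?f ` carrier H"
    proof
      fix g assume "g \<in> carrier (yoke_A n m)"
      then obtain k' a' b' where g: "g = yoke_aut_word n m k' a' b'"
        by (auto simp: carrier_yoke_A[OF assms(2)] yoke_words_def)
      obtain x where x: "x \<in> carrier H" "?f x = yoke_aut_word n m k' a' b'"
        using surj by blast
      show "g \<in> ?f ` carrier H"
        by (rule rev_image_eqI[OF x(1)]) (simp add: g x(2))
    qed
  qed
  have "?f (x \<otimes>\<^bsub>H\<^esub> y) = ?f x \<otimes>\<^bsub>yoke_A n m\<^esub> ?f y"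
    if "x \<in> carrier H" "y \<in> carrier H" for x y
  proof -
    let ?k = "word_prod_shift m (k x) (a x) (b x) (k y) (a y)"
    have "?f (x \<otimes>\<^bsub>H\<^esub> y) = yoke_aut_word n m ?k (a x \<noteq> a y) (b x \<noteq> b y)"
      using mult[OF that] yoke_aut_word_cong[of n "k (x \<otimes>\<^bsub>H\<^esub> y)" ?k m] by simp
    also have "\<dots> = ?f x \<otimes>\<^bsub>yoke_aut n m\<^esub> ?f y"
      by (simp only: yoke_aut_word_mult[OF assms(2)])
    finally show ?thesis
      by (simp add: yoke_A_def)
  qed
  then have "?f \<in> hom H (yoke_A n m)"
    using image by (auto simp: hom_def)
  with image inj have "?f \<in> iso H (yoke_A n m)"
    by (simp add: iso_iff)
  then show ?thesis
    by (rule group.iso_sym[OF assms(1) is_isoI])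
qed

lemma yoke_word_at_0:
  "yoke_word n m k a b v 0 =
     ((if a then (if b then - (int m + v (m+1)) else v (m+1)) else (if b then - v 0 else v 0)) + k) mod int n"
  by (auto simp: yoke_word_def yoke_shift_def yoke_psi_def yoke_tau_def mod_simps)

lemma yoke_word_at_inner:
  assumes "1 \<le> i" "i \<le> m"
  shows "yoke_word n m k a b v i =
     (if b then 1 - v (if a then m+1-i else i) else v (if a then m+1-i else i))"
  using assms by (auto simp: yoke_word_def yoke_shift_def yoke_psi_def yoke_tau_def)

lemma zero_in_yoke_verts: "n > 0 \<Longrightarrow> (\<lambda>_. 0) \<in> yoke_verts n m"
  by (simp add: yoke_verts_iff)

lemma unit_in_yoke_verts:
  "n > 1 \<Longrightarrow> (\<lambda>i::nat. if i = 0 then int n - 1 else if i = 1 then 1 else 0) \<in> yoke_verts n m"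
  by (cases m) (auto simp: yoke_verts_iff)

lemma yoke_aut_word_eq_imp_tau_eq:
  assumes "n > 0" "m > 0" "yoke_aut_word n m k a b = yoke_aut_word n m k' a' b'"
  shows "b = b'"
  using yoke_aut_word_eqD[OF assms(3) zero_in_yoke_verts[OF assms(1)], THEN fun_cong, of 1] assms(2)
  by (simp add: yoke_word_at_inner split: if_splits)

lemma yoke_aut_word_shift_eq_iff:
  assumes "n > 0"
  shows "yoke_aut_word n m k a b = yoke_aut_word n m k' a b \<longleftrightarrow> int n dvd (k - k')"
proof
  assume "yoke_aut_word n m k a b = yoke_aut_word n m k' a b"
  from yoke_aut_word_eqD[OF this zero_in_yoke_verts[OF assms], THEN fun_cong, of 0]
  show "int n dvd (k - k')"
    unfolding yoke_word_at_0 mod_eq_dvd_iff by simp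
qed (rule yoke_aut_word_cong)

(* The zero vertex detects k and b, the vertex (n - 1, 1, 0, ..., 0) detects a. *)
lemma yoke_aut_word_eq_iff:
  assumes "n > 1" "m > 0"
  shows "yoke_aut_word n m k a b = yoke_aut_word n m k' a' b' \<longleftrightarrow> int n dvd (k - k') \<and> a = a' \<and> b = b'"
proof
  assume eq: "yoke_aut_word n m k a b = yoke_aut_word n m k' a' b'"
  let ?u = "\<lambda>i::nat. if i = 0 then int n - 1 else if i = 1 then 1 else 0"
  have z: "yoke_word n m k a b (\<lambda>_. 0) 0 = yoke_word n m k' a' b' (\<lambda>_. 0) 0"
    using yoke_aut_word_eqD[OF eq zero_in_yoke_verts] assms by simp
  have u: "yoke_word n m k a b ?u 0 = yoke_word n m k' a' b' ?u 0"
    using yoke_aut_word_eqD[OF eq unit_in_yoke_verts] assms by simp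
  have b: "b = b'"
    using yoke_aut_word_eq_imp_tau_eq[OF _ assms(2) eq] assms(1) by simp
  from z have dz: "int n dvd ((if a \<and> b then - int m else 0) + k - ((if a' \<and> b then - int m else 0) + k'))"
    unfolding yoke_word_at_0 mod_eq_dvd_iff b by (cases a; cases a'; cases b'; simp)
  from u have du: "int n dvd ((if a then (if b then - int m else 0) else (if b then 1 - int n else int n - 1)) + k
      - ((if a' then (if b then - int m else 0) else (if b then 1 - int n else int n - 1)) + k'))"
    unfolding yoke_word_at_0 mod_eq_dvd_iff b using assms by (cases a; cases a'; cases b'; simp)
  have "a = a'"
  proof (rule ccontr)
    assume "a \<noteq> a'"
    then have "int n dvd (int n - 1) \<or> int n dvd (1 - int n)"
      using dvd_diff[OF du dz] by (cases a; cases b) (simp_all add: algebra_simps)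
    then have "int n dvd 1"
      by (auto simp: dvd_diff_commute[of _ 1] dvd_diff_right_iff)
    then show False using assms(1) zdvd_imp_le by fastforce
  qed
  with dz b show "int n dvd (k - k') \<and> a = a' \<and> b = b'" by simp
qed (auto intro: yoke_aut_word_cong)

lemma yoke_aut_word_eq_iff_m_0:
  assumes "n > 2"
  shows "yoke_aut_word n 0 k a False = yoke_aut_word n 0 k' a' False \<longleftrightarrow> int n dvd (k - k') \<and> a = a'"
proof
  assume eq: "yoke_aut_word n 0 k a False = yoke_aut_word n 0 k' a' False"
  let ?u = "\<lambda>i::nat. if i = 0 then int n - 1 else if i = 1 then 1 else 0"
  have "yoke_word n 0 k a False (\<lambda>_. 0) 0 = yoke_word n 0 k' a' False (\<lambda>_. 0) 0"
    using yoke_aut_word_eqD[OF eq zero_in_yoke_verts] assms by simp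
  then have dz: "int n dvd (k - k')"
    unfolding yoke_word_at_0 mod_eq_dvd_iff by (cases a; cases a'; simp)
  have "yoke_word n 0 k a False ?u 0 = yoke_word n 0 k' a' False ?u 0"
    using yoke_aut_word_eqD[OF eq unit_in_yoke_verts] assms by simp
  then have du: "int n dvd ((if a then 1 else int n - 1) + k - ((if a' then 1 else int n - 1) + k'))"
    unfolding yoke_word_at_0 mod_eq_dvd_iff by (cases a; cases a'; simp)
  have "a = a'"
  proof (rule ccontr)
    assume "a \<noteq> a'"
    then have "int n dvd (int n - 2) \<or> int n dvd (2 - int n)"
      using dvd_diff[OF du dz] by (cases a) (simp_all add: algebra_simps)
    then have "int n dvd 2"
      by (auto simp: dvd_diff_commute[of _ 2] dvd_diff_right_iff)
    then show False using assms zdvd_imp_le by fastforce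
  qed
  with dz show "int n dvd (k - k') \<and> a = a'" by simp
qed (auto intro: yoke_aut_word_cong)

lemma yoke_aut_word_eq_iff_n_1:
  assumes "m > 1"
  shows "yoke_aut_word 1 m k a b = yoke_aut_word 1 m k' a' b' \<longleftrightarrow> a = a' \<and> b = b'"
proof
  assume eq: "yoke_aut_word 1 m k a b = yoke_aut_word 1 m k' a' b'"
  let ?e = "\<lambda>i::nat. if i = 1 then 1 else (0::int)"
  have "?e \<in> yoke_verts 1 m"
    using assms by (auto simp: yoke_verts_iff)
  then have "yoke_word 1 m k a b ?e 1 = yoke_word 1 m k' a' b' ?e 1"
    using yoke_aut_word_eqD[OF eq] by simp
  moreover have "yoke_word 1 m k a b (\<lambda>_. 0) 1 = yoke_word 1 m k' a' b' (\<lambda>_. 0) 1"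
    using yoke_aut_word_eqD[OF eq zero_in_yoke_verts] by simp
  ultimately show "a = a' \<and> b = b'"
    using assms by (simp add: yoke_word_at_inner split: if_splits)
qed (auto intro: yoke_aut_word_cong)

lemma yoke_tau_eq_psi_m_0:
  assumes "v \<in> yoke_verts n 0"
  shows "yoke_tau n 0 v = yoke_psi n 0 v"
proof
  fix i
  have range: "0 \<le> v 0" "v 0 < int n" "0 \<le> v 1" "v 1 < int n" and dvd: "int n dvd (v 0 + v 1)"
    using assms by (auto simp: yoke_verts_iff)
  have "int n dvd (- v 0 - v 1)" "int n dvd (- v 1 - v 0)"
    using dvd_minus_iff[THEN iffD2, OF dvd] by (simp_all add: minus_diff_commute)
  then have "(- v 0) mod int n = v 1" "(- v 1) mod int n = v 0"
    using range by (simp_all flip: mod_eq_dvd_iff)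
  then show "yoke_tau n 0 v i = yoke_psi n 0 v i"
    using assms by (auto simp: yoke_tau_def yoke_psi_def yoke_verts_iff)
qed

lemma yoke_psi_id_1_1: "v \<in> yoke_verts 1 1 \<Longrightarrow> yoke_psi 1 1 v = v"
  by (intro ext) (auto simp: yoke_psi_def yoke_verts_iff numeral_2_eq_2 less_Suc_eq_le le_Suc_eq)

lemma yoke_psi_id_2_0:
  assumes "v \<in> yoke_verts 2 0"
  shows "yoke_psi 2 0 v = v"
proof
  fix i
  have "v 0 \<in> {0, 1}" "v 1 \<in> {0, 1}" "even (v 0 + v 1)"
    using assms by (auto simp: yoke_verts_iff)
  then have "v 0 = v 1" by auto
  then show "yoke_psi 2 0 v i = v i"
    using assms by (auto simp: yoke_psi_def yoke_verts_iff le_Suc_eq)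
qed

lemma yoke_verts_1_0:
  assumes "v \<in> yoke_verts 1 0"
  shows "v = (\<lambda>_. 0)"
proof
  fix i
  show "v i = 0"
    using assms by (cases "i \<le> 1") (auto simp: yoke_verts_iff le_Suc_eq)
qed

lemma carrier_dihedral_group: "carrier (dihedral_group k) = {0..<int k} \<times> UNIV"
  by (simp add: dihedral_group_def)

lemma mult_dihedral_group:
  "(i, a) \<otimes>\<^bsub>dihedral_group k\<^esub> (j, b) = ((i + (if a then - j else j)) mod int k, a \<noteq> b)"
  by (simp add: dihedral_group_def)

lemma group_dihedral_group:
  assumes "k > 0"
  shows "group (dihedral_group k)"
proof (rule groupI)
  fix x y z assume "x \<in> carrier (dihedral_group k)" "y \<in> carrier (dihedral_group k)"
    "z \<in> carrier (dihedral_group k)"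
  obtain i a j b l c where "x = (i, a)" "y = (j, b)" "z = (l, c)"
    by (metis prod.exhaust)
  then show "x \<otimes>\<^bsub>dihedral_group k\<^esub> y \<otimes>\<^bsub>dihedral_group k\<^esub> z
      = x \<otimes>\<^bsub>dihedral_group k\<^esub> (y \<otimes>\<^bsub>dihedral_group k\<^esub> z)"
    by (cases a; cases b) (simp_all add: mult_dihedral_group mod_simps algebra_simps)
next
  fix x assume "x \<in> carrier (dihedral_group k)"
  then obtain i a where x: "x = (i, a)" "0 \<le> i" "i < int k"
    by (auto simp: carrier_dihedral_group)
  show "\<one>\<^bsub>dihedral_group k\<^esub> \<otimes>\<^bsub>dihedral_group k\<^esub> x = x"
    using x by (simp add: dihedral_group_def)
  show "\<exists>y\<in>carrier (dihedral_group k). y \<otimes>\<^bsub>dihedral_group k\<^esub> x = \<one>\<^bsub>dihedral_group k\<^esub>"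
    using assms
    by (intro bexI[of _ "(if a then i else (- i) mod int k, a)"])
       (auto simp: x dihedral_group_def mod_simps)
qed (use assms in \<open>auto simp: dihedral_group_def\<close>)

lemma int_eq_if_dvd_diff:
  fixes x y d :: int
  assumes "0 \<le> x" "x < d" "0 \<le> y" "y < d" "d dvd (x - y)"
  shows "x = y"
  using assms by (metis mod_eq_dvd_iff mod_pos_pos_trivial)

lemma yoke_A_1_0_iso: "yoke_A 1 0 \<cong> cyclic_group 1"
proof (rule yoke_A_isoI[where k = "\<lambda>_. 0" and a = "\<lambda>_. False" and b = "\<lambda>_. False"])
  fix k a b
  have "yoke_aut_word 1 0 k a b = yoke_aut_word 1 0 0 False False"
  proof (rule yoke_aut_word_eqI)
    fix v assume v: "v \<in> yoke_verts 1 0"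
    have "yoke_word 1 0 k a b v = (\<lambda>_. 0)"
      by (rule yoke_verts_1_0[OF yoke_word_in_verts[OF _ v]]) simp
    with v yoke_verts_1_0[OF v] show "yoke_word 1 0 k a b v = yoke_word 1 0 0 False False v"
      by (simp add: yoke_word_zero)
  qed
  then show "\<exists>x\<in>carrier (cyclic_group 1). yoke_aut_word 1 0 0 False False = yoke_aut_word 1 0 k a b"
    by (auto simp: carrier_integer_mod_group)
qed (auto simp: inj_on_def carrier_integer_mod_group)

lemma yoke_A_2_0_iso: "yoke_A 2 0 \<cong> cyclic_group 2"
proof (rule yoke_A_isoI[where k = "\<lambda>x. x" and a = "\<lambda>_. False" and b = "\<lambda>_. False"])
  fix k a b
  have "yoke_aut_word 2 0 (k mod 2) False False = yoke_aut_word 2 0 k a b"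
    by (rule yoke_aut_word_eqI)
       (auto simp: yoke_word_def yoke_shift_mod[of 2, simplified] yoke_tau_eq_psi_m_0 yoke_psi_id_2_0
         yoke_tau_in_verts)
  then show "\<exists>x\<in>carrier (cyclic_group 2). yoke_aut_word 2 0 x False False = yoke_aut_word 2 0 k a b"
    by (auto simp: carrier_integer_mod_group)
  show "inj_on (\<lambda>x. yoke_aut_word 2 0 x False False) (carrier (cyclic_group 2))"
    by (auto simp: inj_on_def carrier_integer_mod_group yoke_aut_word_shift_eq_iff) presburger+
qed (auto simp: word_prod_shift_def mod_eq_dvd_iff[symmetric])

lemma yoke_A_1_1_iso: "yoke_A 1 1 \<cong> cyclic_group 2"
proof (rule yoke_A_isoI[where k = "\<lambda>_. 0" and a = "\<lambda>_. False" and b = "\<lambda>x. x = 1"])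
  fix k a b
  have "yoke_aut_word 1 1 0 False b = yoke_aut_word 1 1 0 a b"
    by (rule yoke_aut_word_eqI)
       (auto simp: yoke_word_def yoke_psi_id_1_1[simplified] yoke_tau_in_verts)
  also have "\<dots> = yoke_aut_word 1 1 k a b"
    by (rule yoke_aut_word_cong) simp
  finally show "\<exists>x\<in>carrier (cyclic_group 2). yoke_aut_word 1 1 0 False (x = 1) = yoke_aut_word 1 1 k a b"
    by (intro bexI[of _ "if b then 1 else 0"]) (auto simp: carrier_integer_mod_group)
  show "inj_on (\<lambda>x. yoke_aut_word 1 1 0 False (x = 1)) (carrier (cyclic_group 2))"
    by (auto simp: inj_on_def carrier_integer_mod_group dest: yoke_aut_word_eq_imp_tau_eq[rotated 2])
qed (auto simp: carrier_integer_mod_group)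

lemma yoke_A_1_m_iso:
  assumes "m > 1"
  shows "yoke_A 1 m \<cong> cyclic_group 2 \<times>\<times> cyclic_group 2"
proof (rule yoke_A_isoI[where k = "\<lambda>_. 0" and a = "\<lambda>x. fst x = 1" and b = "\<lambda>x. snd x = 1"])
  fix k a b
  have "yoke_aut_word 1 m 0 a b = yoke_aut_word 1 m k a b"
    by (rule yoke_aut_word_cong) simp
  then show "\<exists>x\<in>carrier (cyclic_group 2 \<times>\<times> cyclic_group 2).
      yoke_aut_word 1 m 0 (fst x = 1) (snd x = 1) = yoke_aut_word 1 m k a b"
    by (intro bexI[of _ "(if a then 1 else 0, if b then 1 else 0)"]) (auto simp: carrier_integer_mod_group)
next
  show "inj_on (\<lambda>x. yoke_aut_word 1 m 0 (fst x = 1) (snd x = 1)) (carrier (cyclic_group 2 \<times>\<times> cyclic_group 2))"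
  proof (rule inj_onI)
    fix x y
    assume "x \<in> carrier (cyclic_group 2 \<times>\<times> cyclic_group 2)" "y \<in> carrier (cyclic_group 2 \<times>\<times> cyclic_group 2)"
      and "yoke_aut_word 1 m 0 (fst x = 1) (snd x = 1) = yoke_aut_word 1 m 0 (fst y = 1) (snd y = 1)"
    with yoke_aut_word_eq_iff_n_1[OF assms] show "x = y"
      by (cases x; cases y) (auto simp: carrier_integer_mod_group)
  qed
qed (auto simp: carrier_integer_mod_group DirProd_group)

lemma yoke_A_n_0_iso:
  assumes "n > 2"
  shows "yoke_A n 0 \<cong> dihedral_group n"
proof (rule yoke_A_isoI[where k = fst and a = snd and b = "\<lambda>_. False"])
  fix k a b
  have "yoke_aut_word n 0 (k mod int n) (a \<noteq> b) False = yoke_aut_word n 0 k a b"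
    using assms
    by (intro yoke_aut_word_eqI)
       (auto simp: yoke_word_def yoke_shift_mod yoke_tau_eq_psi_m_0 yoke_psi_psi yoke_tau_in_verts)
  then show "\<exists>x\<in>carrier (dihedral_group n). yoke_aut_word n 0 (fst x) (snd x) False = yoke_aut_word n 0 k a b"
    using assms by (intro bexI[of _ "(k mod int n, a \<noteq> b)"]) (auto simp: carrier_dihedral_group)
  show "inj_on (\<lambda>x. yoke_aut_word n 0 (fst x) (snd x) False) (carrier (dihedral_group n))"
    using assms by (auto simp: inj_on_def carrier_dihedral_group yoke_aut_word_eq_iff_m_0
        intro: int_eq_if_dvd_diff)
  show "group (dihedral_group n)"
    using assms by (simp add: group_dihedral_group)
qed (use assms in \<open>auto simp: carrier_dihedral_group dihedral_group_def word_prod_shift_def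
      mod_eq_dvd_iff[symmetric]\<close>)

(* The shift of the normal form of \<rho>\<^sup>i \<psi>\<^sup>c, where \<rho> = \<sigma>\<^sub>j \<psi> \<tau> and \<rho>\<^sup>2 = \<phi> if 2j \<equiv> m + 1 (mod n). *)
definition rotation_shift :: "int \<Rightarrow> nat \<Rightarrow> int \<Rightarrow> bool \<Rightarrow> int" where
  "rotation_shift j m i c = i div 2 + (if odd i then j else 0) - (if c \<and> odd i then int m else 0)"

lemma div_2_add_sub_cases:
  fixes i i' :: int
  shows "odd i \<Longrightarrow> odd i' \<Longrightarrow> (i + i') div 2 = i div 2 + i' div 2 + 1"
    and "even i \<or> even i' \<Longrightarrow> (i + i') div 2 = i div 2 + i' div 2"
    and "even i \<Longrightarrow> odd i' \<Longrightarrow> (i - i') div 2 = i div 2 - i' div 2 - 1"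
    and "odd i \<or> even i' \<Longrightarrow> (i - i') div 2 = i div 2 - i' div 2"
  by presburger+

lemma word_prod_shift_rotation:
  assumes "int n dvd (2 * j - int m - 1)"
  shows "int n dvd (rotation_shift j m (i + (if c then - i' else i')) (c \<noteq> c')
           - word_prod_shift m (rotation_shift j m i c) (c \<noteq> odd i) (odd i)
               (rotation_shift j m i' c') (c' \<noteq> odd i'))"
proof -
  have "odd (i + (if c then - i' else i')) = (odd i \<noteq> odd i')"
    by (cases c) auto
  then have "rotation_shift j m (i + (if c then - i' else i')) (c \<noteq> c')
        - word_prod_shift m (rotation_shift j m i c) (c \<noteq> odd i) (odd i)
            (rotation_shift j m i' c') (c' \<noteq> odd i')
      \<in> {0, 2 * j - int m - 1, - (2 * j - int m - 1)}"
    unfolding rotation_shift_def word_prod_shift_def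
    by (cases c; cases c'; cases "odd i"; cases "odd i'") (simp_all add: div_2_add_sub_cases)
  with assms show ?thesis
    by (metis dvd_0_right dvd_minus_iff insertE singletonD)
qed

lemma rotation_shift_mod:
  "int n dvd (rotation_shift j m (r mod (2 * int n)) c - rotation_shift j m r c)"
  "odd (r mod (2 * int n)) = odd r"
proof -
  define t where "t = - (r div (2 * int n))"
  have "r mod (2 * int n) = r + 2 * (int n * t)"
    by (simp add: t_def minus_div_mult_eq_mod[symmetric] algebra_simps)
  moreover have "(r + 2 * (int n * t)) div 2 = r div 2 + int n * t"
    by simp
  ultimately show "int n dvd (rotation_shift j m (r mod (2 * int n)) c - rotation_shift j m r c)"
    "odd (r mod (2 * int n)) = odd r"
    by (simp_all add: rotation_shift_def)
qed

lemma obtain_half_mod: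
  assumes "odd n \<or> odd m"
  obtains j :: int where "int n dvd (2 * j - int m - 1)"
proof (cases "odd m")
  case True
  then have "2 * ((int m + 1) div 2) - int m - 1 = 0"
    by presburger
  then show ?thesis
    using that by (metis dvd_0_right)
next
  case False
  with assms have "2 * ((int m + 1 + int n) div 2) - int m - 1 = int n"
    by presburger
  then show ?thesis
    using that by (metis dvd_refl)
qed

lemma yoke_A_odd_iso:
  assumes "n > 1" "m > 0" "odd n \<or> odd m"
  shows "yoke_A n m \<cong> dihedral_group (2 * n)"
proof -
  let ?G = "dihedral_group (2 * n)"
  obtain j where j: "int n dvd (2 * j - int m - 1)"
    using obtain_half_mod[OF assms(3)] .
  let ?k = "\<lambda>(i, c). rotation_shift j m i c" and ?a = "\<lambda>(i, c). c \<noteq> odd i" and ?b = "\<lambda>(i, c). odd i"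
  show ?thesis
  proof (rule yoke_A_isoI[where k = ?k and a = ?a and b = ?b])
    show "group ?G" "n > 0"
      using assms by (simp_all add: group_dihedral_group)
  next
    fix k a b
    define q where "q = (k - (if b then j else 0) + (if a \<noteq> b \<and> b then int m else 0)) mod int n"
    define i where "i = 2 * q + (if b then 1 else 0)"
    have q: "0 \<le> q" "q < int n" "int n dvd (q - (k - (if b then j else 0) + (if a \<noteq> b \<and> b then int m else 0)))"
      using assms by (simp_all add: q_def mod_eq_dvd_iff[symmetric])
    have i: "odd i = b" "i div 2 = q"
      by (simp_all add: i_def)
    then have diff: "rotation_shift j m i (a \<noteq> b) - k
        = q - (k - (if b then j else 0) + (if a \<noteq> b \<and> b then int m else 0))"
      by (cases a; cases b) (simp_all add: rotation_shift_def)
    have "yoke_aut_word n m (rotation_shift j m i (a \<noteq> b)) a b = yoke_aut_word n m k a b"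
      by (intro yoke_aut_word_cong) (simp only: diff q(3))
    moreover have "(i, a \<noteq> b) \<in> carrier ?G"
      using q by (auto simp: i_def carrier_dihedral_group)
    ultimately show "\<exists>x\<in>carrier ?G.
        yoke_aut_word n m (?k x) (?a x) (?b x) = yoke_aut_word n m k a b"
      using i(1) by (intro bexI[of _ "(i, a \<noteq> b)"]) auto
  next
    show "inj_on (\<lambda>x. yoke_aut_word n m (?k x) (?a x) (?b x)) (carrier ?G)"
    proof (rule inj_onI, clarify)
      fix i c i' c'
      assume "(i, c) \<in> carrier ?G" "(i', c') \<in> carrier ?G"
        and "yoke_aut_word n m (rotation_shift j m i c) (c \<noteq> odd i) (odd i)
           = yoke_aut_word n m (rotation_shift j m i' c') (c' \<noteq> odd i') (odd i')"
      then have range: "0 \<le> i div 2" "i div 2 < int n" "0 \<le> i' div 2" "i' div 2 < int n"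
        and eq: "int n dvd (rotation_shift j m i c - rotation_shift j m i' c')" "c = c'" "odd i = odd i'"
        using assms by (auto simp: carrier_dihedral_group yoke_aut_word_eq_iff)
      then have "int n dvd (i div 2 - i' div 2)"
        by (simp add: rotation_shift_def)
      with range have "i div 2 = i' div 2"
        by (rule int_eq_if_dvd_diff)
      with eq(2,3) show "i = i' \<and> c = c'"
        by presburger
    qed
  next
    fix x y assume "x \<in> carrier ?G" "y \<in> carrier ?G"
    obtain i c i' c' where xy: "x = (i, c)" "y = (i', c')"
      by (metis prod.exhaust)
    let ?r = "i + (if c then - i' else i')"
    have prod: "x \<otimes>\<^bsub>?G\<^esub> y = (?r mod (2 * int n), c \<noteq> c')"
      by (simp add: xy mult_dihedral_group)
    have odd_r: "odd (?r mod (2 * int n)) = (odd i \<noteq> odd i')"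
      using rotation_shift_mod(2)[of ?r n] by (cases c) auto
    have "int n dvd (rotation_shift j m (?r mod (2 * int n)) (c \<noteq> c') - rotation_shift j m ?r (c \<noteq> c')
        + (rotation_shift j m ?r (c \<noteq> c')
           - word_prod_shift m (rotation_shift j m i c) (c \<noteq> odd i) (odd i)
               (rotation_shift j m i' c') (c' \<noteq> odd i')))"
      by (intro dvd_add rotation_shift_mod(1) word_prod_shift_rotation j)
    with odd_r show "int n dvd (?k (x \<otimes>\<^bsub>?G\<^esub> y) - word_prod_shift m (?k x) (?a x) (?b x) (?k y) (?a y))
        \<and> ?a (x \<otimes>\<^bsub>?G\<^esub> y) = (?a x \<noteq> ?a y)
        \<and> ?b (x \<otimes>\<^bsub>?G\<^esub> y) = (?b x \<noteq> ?b y)"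
      unfolding prod by (cases c) (auto simp: xy)
  qed
qed

(* The shift of the normal form of \<phi>\<^sup>i \<psi>\<^sup>c \<zeta>\<^sup>z, where \<zeta> = \<sigma>\<^sub>h \<psi> \<tau> and m = 2h. *)
definition centre_shift :: "int \<Rightarrow> int \<Rightarrow> bool \<Rightarrow> bool \<Rightarrow> int" where
  "centre_shift h i c z = i + (if z then (if c then - h else h) else 0)"

lemma word_prod_shift_centre:
  assumes "2 * h = int m"
  shows "word_prod_shift m (centre_shift h i c z) (c \<noteq> z) z (centre_shift h i' c' z') (c' \<noteq> z')
           = centre_shift h (i + (if c then - i' else i')) (c \<noteq> c') (z \<noteq> z')"
  using assms unfolding centre_shift_def word_prod_shift_def
  by (cases c; cases c'; cases z; cases z') simp_all

lemma yoke_A_even_m_iso: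
  assumes "n > 1" "m > 0" "even m"
  shows "yoke_A n m \<cong> dihedral_group n \<times>\<times> cyclic_group 2"
proof -
  let ?G = "dihedral_group n \<times>\<times> cyclic_group 2"
  define h where "h = int m div 2"
  have h: "2 * h = int m"
    using assms(3) by (simp add: h_def)
  let ?k = "\<lambda>((i, c), z). centre_shift h i c (z = 1)" and ?a = "\<lambda>((i, c), z). c \<noteq> (z = 1)"
    and ?b = "\<lambda>((i, c), z::int). z = 1"
  show ?thesis
  proof (rule yoke_A_isoI[where k = ?k and a = ?a and b = ?b])
    show "group ?G" "n > 0"
      using assms by (simp_all add: group_dihedral_group DirProd_group)
  next
    fix k a b
    define i where "i = (k - (if b then (if a \<noteq> b then - h else h) else 0)) mod int n"
    have "yoke_aut_word n m (centre_shift h i (a \<noteq> b) b) a b = yoke_aut_word n m k a b"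
      by (intro yoke_aut_word_cong) (simp add: centre_shift_def i_def mod_eq_dvd_iff[symmetric] mod_simps)
    moreover have "((i, a \<noteq> b), if b then 1 else 0) \<in> carrier ?G"
      using assms by (simp add: i_def carrier_dihedral_group carrier_integer_mod_group)
    ultimately show "\<exists>x\<in>carrier ?G.
        yoke_aut_word n m (?k x) (?a x) (?b x) = yoke_aut_word n m k a b"
      by (intro bexI[of _ "((i, a \<noteq> b), if b then 1 else 0)"]) auto
  next
    show "inj_on (\<lambda>x. yoke_aut_word n m (?k x) (?a x) (?b x)) (carrier ?G)"
    proof (rule inj_onI)
      fix x y
      assume "x \<in> carrier ?G"
        "y \<in> carrier ?G"
        and "yoke_aut_word n m (?k x) (?a x) (?b x) = yoke_aut_word n m (?k y) (?a y) (?b y)"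
      moreover obtain i c z i' c' z' where xy: "x = ((i, c), z)" "y = ((i', c'), z')"
        by (metis prod.exhaust)
      ultimately have range: "0 \<le> i" "i < int n" "0 \<le> i'" "i' < int n" "z \<in> {0, 1}" "z' \<in> {0, 1}"
        and eq: "int n dvd (centre_shift h i c (z = 1) - centre_shift h i' c' (z' = 1))"
          "c = c'" "(z = 1) = (z' = 1)"
        using assms by (auto simp: carrier_dihedral_group carrier_integer_mod_group yoke_aut_word_eq_iff)
      then have "int n dvd (i - i')"
        by (simp add: centre_shift_def)
      with range(1-4) have "i = i'"
        by (rule int_eq_if_dvd_diff)
      with eq(2,3) range(5,6) show "x = y"
        by (auto simp: xy)
    qed
  next
    fix x y assume "x \<in> carrier ?G"
      "y \<in> carrier ?G"
    moreover obtain i c z i' c' z' where xy: "x = ((i, c), z)" "y = ((i', c'), z')"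
      by (metis prod.exhaust)
    ultimately have z: "z \<in> {0, 1}" "z' \<in> {0, 1}"
      by (auto simp: carrier_integer_mod_group)
    let ?r = "i + (if c then - i' else i')"
    have prod: "x \<otimes>\<^bsub>?G\<^esub> y = ((?r mod int n, c \<noteq> c'), (z + z') mod 2)"
      by (simp add: xy mult_dihedral_group)
    have wps: "word_prod_shift m (?k x) (?a x) (?b x) (?k y) (?a y)
        = centre_shift h ?r (c \<noteq> c') ((z = 1) \<noteq> (z' = 1))"
      unfolding xy by (simp only: prod.case word_prod_shift_centre[OF h])
    have "((z + z') mod 2 = 1) = ((z = 1) \<noteq> (z' = 1))"
      using z by auto
    moreover have "int n dvd (centre_shift h (?r mod int n) (c \<noteq> c') ((z = 1) \<noteq> (z' = 1))
        - centre_shift h ?r (c \<noteq> c') ((z = 1) \<noteq> (z' = 1)))"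
      by (simp add: centre_shift_def mod_eq_dvd_iff[symmetric])
    ultimately show "int n dvd (?k (x \<otimes>\<^bsub>?G\<^esub> y) - word_prod_shift m (?k x) (?a x) (?b x) (?k y) (?a y))
        \<and> ?a (x \<otimes>\<^bsub>?G\<^esub> y) = (?a x \<noteq> ?a y)
        \<and> ?b (x \<otimes>\<^bsub>?G\<^esub> y) = (?b x \<noteq> ?b y)"
      unfolding prod wps by (simp add: xy) blast
  qed
qed

theorem theorem6p4:
  shows "yoke_A 1 0 \<cong> cyclic_group 1
    \<and> yoke_A 2 0 \<cong> cyclic_group 2 \<and> yoke_A 1 1 \<cong> cyclic_group 2
    \<and> (\<forall>n>2. yoke_A n 0 \<cong> dihedral_group n)
    \<and> (\<forall>m>1. yoke_A 1 m \<cong> cyclic_group 2 \<times>\<times> cyclic_group 2)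
    \<and> (\<forall>n m. n > 1 \<and> m > 0 \<longrightarrow>
          ((odd n \<or> odd m) \<longrightarrow> yoke_A n m \<cong> dihedral_group (2*n))
        \<and> ((even n \<and> even m) \<longrightarrow> yoke_A n m \<cong> dihedral_group n \<times>\<times> cyclic_group 2))"
  using yoke_A_1_0_iso yoke_A_2_0_iso yoke_A_1_1_iso yoke_A_n_0_iso yoke_A_1_m_iso
    yoke_A_odd_iso yoke_A_even_m_iso
  by blast

end
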